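(* Consider the online energy harvesting two-hop status update system described in the context, with service times $d>0$ and $\bar d>0$. The optimal long term average age satisfies $$\rho\ \ge\ \max\left\{\tfrac12+d+\bar d,\ \tfrac32(d+\bar d)\right\}.$$
   Context: A source sends status updates to a destination through a half-duplex relay. Energy arrives at the source and at the relay according to two independent Poisson processes of unit rate. Each node has an infinite battery, and at time $0$ each battery holds exactly one energy packet. Transmitting one update consumes one energy packet at the transmitting node, and a node may transmit only if its battery holds at least one packet just before the transmission time (energy causality). An update transmitted by the source at time $t_i$ is generated at time $t_i$ and reaches the relay at time $t_i+d$. The relay forwards it at a time $\bar t_i\ge t_i+d$ (data causality), and it reaches the destination at time $\bar t_i+\bar d$. The source may transmit the next update only at a time $t_{i+1}\ge \bar t_i+\bar d$. Transmission decisions are made online by a central controller which, at each time, knows the energy arrivals at both nodes up to that time but not future arrivals. The age of information is $a(t)=t-u(t)$, where $u(t)$ is the generation time of the latest update received at the destination before time $t$, with $a(0)=0$. Let $A_T=\int_0^T a(t)\,dt$, and let $\rho$ be the minimum, over all such feasible online policies, of $\limsup_{T\to\infty}\frac1T\mathbb{E}[A_T]$. *)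

theory Defs
  imports "HOL-Probability.Probability"
begin

text \<open>Sample space: a pair of sequences of i.i.d. Exp(1) inter-arrival times,
  the first for the source, the second for the relay.\<close>

definition Exp1 :: "real measure" where
  "Exp1 = density lborel (\<lambda>x. ennreal (exponential_density 1 x))"

definition EH_space :: "((nat \<Rightarrow> real) \<times> (nat \<Rightarrow> real)) measure" where
  "EH_space = (\<Pi>\<^sub>M i\<in>UNIV. Exp1) \<Otimes>\<^sub>M (\<Pi>\<^sub>M i\<in>UNIV. Exp1)"

definition arrival :: "(nat \<Rightarrow> real) \<Rightarrow> nat \<Rightarrow> real" where
  "arrival x k = (\<Sum>j<k. x j)"

text \<open>Number of energy arrivals strictly before time s (the initial packet is not counted).\<close>

definition arrivals_before :: "(nat \<Rightarrow> real) \<Rightarrow> real \<Rightarrow> nat" where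
  "arrivals_before x s = card {k. 1 \<le> k \<and> arrival x k < s}"

definition EH_filtr :: "real \<Rightarrow> ((nat \<Rightarrow> real) \<times> (nat \<Rightarrow> real)) measure" where
  "EH_filtr s = sigma (space EH_space)
     ({{\<omega> \<in> space EH_space. arrival (fst \<omega>) k \<le> r} | k r. 1 \<le> k \<and> r \<le> s} \<union>
      {{\<omega> \<in> space EH_space. arrival (snd \<omega>) k \<le> r} | k r. 1 \<le> k \<and> r \<le> s})"

text \<open>Feasible online policies: t i = transmission time of the i-th update (i = 0,1,...)
  at the source, tb i = its forwarding time at the relay.\<close>

definition feasible_policy ::
  "real \<Rightarrow> real \<Rightarrow> (nat \<Rightarrow> (nat \<Rightarrow> real) \<times> (nat \<Rightarrow> real) \<Rightarrow> real)
        \<Rightarrow> (nat \<Rightarrow> (nat \<Rightarrow> real) \<times> (nat \<Rightarrow> real) \<Rightarrow> real) \<Rightarrow> bool" where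
  "feasible_policy d db t tb \<longleftrightarrow>
     (\<forall>i. stopping_time EH_filtr (t i) \<and> stopping_time EH_filtr (tb i)) \<and>
     (AE \<omega> in EH_space.
        0 \<le> t 0 \<omega> \<and>
        (\<forall>i. t i \<omega> + d \<le> tb i \<omega>) \<and>
        (\<forall>i. tb i \<omega> + db \<le> t (Suc i) \<omega>) \<and>
        (\<forall>i. i \<le> arrivals_before (fst \<omega>) (t i \<omega>)) \<and>
        (\<forall>i. i \<le> arrivals_before (snd \<omega>) (tb i \<omega>)))"

text \<open>Generation time of the latest update received at the destination before time s
  (0 if none, so that the age at time 0 is 0), and the age.\<close>

definition latest_gen ::
  "real \<Rightarrow> (nat \<Rightarrow> real) \<Rightarrow> (nat \<Rightarrow> real) \<Rightarrow> real \<Rightarrow> real" where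
  "latest_gen db t tb s = Sup (insert 0 {t i | i. tb i + db < s})"

definition age :: "real \<Rightarrow> (nat \<Rightarrow> real) \<Rightarrow> (nat \<Rightarrow> real) \<Rightarrow> real \<Rightarrow> real" where
  "age db t tb s = s - latest_gen db t tb s"

definition expected_area ::
  "real \<Rightarrow> (nat \<Rightarrow> (nat \<Rightarrow> real) \<times> (nat \<Rightarrow> real) \<Rightarrow> real)
        \<Rightarrow> (nat \<Rightarrow> (nat \<Rightarrow> real) \<times> (nat \<Rightarrow> real) \<Rightarrow> real) \<Rightarrow> real \<Rightarrow> ennreal" where
  "expected_area db t tb T =
     (\<integral>\<^sup>+ \<omega>. (\<integral>\<^sup>+ s\<in>{0..T}. ennreal (age db (\<lambda>i. t i \<omega>) (\<lambda>i. tb i \<omega>) s) \<partial>lborel) \<partial>EH_space)"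

definition avg_age ::
  "real \<Rightarrow> (nat \<Rightarrow> (nat \<Rightarrow> real) \<times> (nat \<Rightarrow> real) \<Rightarrow> real)
        \<Rightarrow> (nat \<Rightarrow> (nat \<Rightarrow> real) \<times> (nat \<Rightarrow> real) \<Rightarrow> real) \<Rightarrow> ennreal" where
  "avg_age db t tb = Limsup at_top (\<lambda>T. ennreal (1 / T) * expected_area db t tb T)"

definition opt_age :: "real \<Rightarrow> real \<Rightarrow> ennreal" where
  "opt_age d db = (INF (t, tb) \<in> {(t, tb). feasible_policy d db t tb}. avg_age db t tb)"

end

theory Submission
  imports Defs
begin

(* Fix a sample path and write D_i = tb_i + db for the delivery times and c = d + db. Every
   cycle lasts at least c, and between the k-th and the (k+1)-st delivery the age is at least c
   plus the time elapsed since D_k, so a segment of length x between deliveries contributes at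
   least c x + x^2/2 to the area A_T. Summing over segments gives A_T >= 3/2 c T - 5/4 c^2,
   because complete segments have length at least c, and, by Cauchy-Schwarz over the at most
   n + 2 segments, A_T >= c T - c^2/(2e) + (1-e)/2 T^2/(n+2) if at most n + 1 deliveries occur
   by time T. Energy causality at the source bounds n by the number N_T of source energy
   arrivals before T; a Chernoff bound gives E N_T <= (1+e) T + 1 + 1/e, and Jensen's
   inequality for 1/x turns the second bound into E A_T >= (c + (1-e)/(2(1+e))) T - O(1).
   Dividing by T and letting T -> infinity, then e -> 0, gives the two terms of the maximum. *)

section \<open>Sample-path bounds on the area under the age\<close>

lemma ennreal_plus_le:
  "0 \<le> y \<Longrightarrow> ennreal (x + y) \<le> ennreal x + ennreal y"
  by (cases "0 \<le> x") (simp_all add: ennreal_neg ennreal_leI)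

lemma nn_integral_Icc_ge_linear:
  fixes f :: "real \<Rightarrow> real"
  assumes "a \<le> b" "0 \<le> \<alpha>" "\<And>s. a \<le> s \<Longrightarrow> s \<le> b \<Longrightarrow> \<alpha> + (s - a) \<le> f s"
  shows "ennreal (\<alpha> * (b - a) + (b - a)^2 / 2) \<le> (\<integral>\<^sup>+ s\<in>{a..b}. ennreal (f s) \<partial>lborel)"
proof -
  have "(\<integral>\<^sup>+ s\<in>{a..b}. ennreal (\<alpha> + (s - a)) \<partial>lborel)
      = ennreal ((\<alpha> * b + (b - a)^2 / 2) - (\<alpha> * a + (a - a)^2 / 2))"
  proof (rule nn_integral_FTC_Icc)
    fix s assume "s \<in> {a..b}"
    then show "0 \<le> \<alpha> + (s - a)" using assms by auto
    show "((\<lambda>s. \<alpha> * s + (s - a)^2 / 2) has_real_derivative \<alpha> + (s - a)) (at s)"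
      by (auto intro!: derivative_eq_intros simp: field_simps)
  qed (use assms in auto)
  also have "\<dots> = ennreal (\<alpha> * (b - a) + (b - a)^2 / 2)"
    by (simp add: algebra_simps)
  moreover have "(\<integral>\<^sup>+ s\<in>{a..b}. ennreal (\<alpha> + (s - a)) \<partial>lborel)
      \<le> (\<integral>\<^sup>+ s\<in>{a..b}. ennreal (f s) \<partial>lborel)"
    by (intro nn_integral_mono) (auto simp: indicator_def intro!: ennreal_leI assms(3))
  ultimately show ?thesis by simp
qed

lemma weighted_power2_add_divide_le:
  fixes a x e n :: real
  assumes "0 < n" "0 \<le> e" "e \<le> 1"
  shows "(1 - e) / 2 * ((a + x)^2 / (n + 1)) \<le> (1 - e) / 2 * (a^2 / n) + x^2 / 2"
proof -
  have "n * (a + x)^2 \<le> (n + 1) * (a^2 + n * x^2)"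
    using zero_le_power2[of "a - n * x"] by (simp add: power2_eq_square algebra_simps)
  then have "(a + x)^2 / (n + 1) \<le> a^2 / n + x^2"
    using assms(1) by (simp add: field_simps)
  then have "(1 - e) / 2 * ((a + x)^2 / (n + 1)) \<le> (1 - e) / 2 * (a^2 / n + x^2)"
    using assms by (intro mult_left_mono) auto
  moreover have "(1 - e) * x^2 \<le> 1 * x^2"
    using assms by (intro mult_right_mono) auto
  ultimately show ?thesis
    by (simp add: distrib_left)
qed

locale update_schedule =
  fixes t D :: "nat \<Rightarrow> real" and c :: real
  assumes c_pos: "0 < c" and t_0_nonneg: "0 \<le> t 0"
    and t_plus_c_le_D: "\<And>i. t i + c \<le> D i" and D_le_t_Suc: "\<And>i. D i \<le> t (Suc i)"
begin

definition latest :: "real \<Rightarrow> real" where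
  "latest s = Sup (insert 0 {t i | i. D i < s})"

definition area :: "real \<Rightarrow> ennreal" where
  "area T = (\<integral>\<^sup>+ s\<in>{0..T}. ennreal (s - latest s) \<partial>lborel)"

lemma D_plus_c_le_D_Suc: "D i + c \<le> D (Suc i)"
  using t_plus_c_le_D[of "Suc i"] D_le_t_Suc[of i] by linarith

lemma D_ge: "c * (real i + 1) \<le> D i"
proof (induction i)
  case 0
  then show ?case using t_plus_c_le_D[of 0] t_0_nonneg by simp
next
  case (Suc i)
  then show ?case using D_plus_c_le_D_Suc[of i] by (simp add: algebra_simps)
qed

lemma c_le_D: "c \<le> D i"
proof -
  have "0 \<le> c * real i" using c_pos by simp
  then show ?thesis using D_ge[of i] by (simp add: algebra_simps)
qed

lemma D_nonneg: "0 \<le> D i"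
  using c_le_D[of i] c_pos by linarith

lemma strict_mono_D: "strict_mono D"
proof (rule strict_monoI_Suc)
  show "D i < D (Suc i)" for i
    using D_plus_c_le_D_Suc[of i] c_pos by linarith
qed

lemma D_less_D_iff [simp]: "D i < D j \<longleftrightarrow> i < j"
  using strict_mono_D by (rule strict_mono_less)

lemma D_le_D_iff [simp]: "D i \<le> D j \<longleftrightarrow> i \<le> j"
  using strict_mono_D by (rule strict_mono_less_eq)

lemma mono_t: "mono t"
proof (rule mono_iff_le_Suc[THEN iffD2], intro allI)
  show "t i \<le> t (Suc i)" for i
    using t_plus_c_le_D[of i] D_le_t_Suc[of i] c_pos by linarith
qed

lemma t_nonneg: "0 \<le> t i"
  using monoD[OF mono_t, of 0 i] t_0_nonneg by simp

lemma exists_D_ge: "\<exists>n. s \<le> D n"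
proof -
  obtain n :: nat where "s / c \<le> real n" using real_arch_simple by blast
  then have "s \<le> c * (real n + 1)" using c_pos by (simp add: field_simps)
  then show ?thesis using D_ge[of n] by (intro exI[of _ n]) linarith
qed

lemma between_deliveries:
  assumes "D 0 < s"
  obtains j where "D j < s" "s \<le> D (Suc j)"
proof -
  define m where "m = (LEAST m. s \<le> D m)"
  have s_le: "s \<le> D m"
    unfolding m_def using exists_D_ge by (rule LeastI_ex)
  then obtain j where j: "m = Suc j"
    using assms by (cases m) auto
  have "\<not> s \<le> D j"
    using not_less_Least[of j "\<lambda>m. s \<le> D m"] unfolding m_def[symmetric] j by simp
  then show ?thesis using s_le j that by (simp add: not_le)
qed

lemma latest_eq_0:
  assumes "s \<le> D 0"
  shows "latest s = 0"
proof -
  have "\<not> D i < s" for i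
    using assms D_le_D_iff[of 0 i] by linarith
  then show ?thesis unfolding latest_def by simp
qed

lemma latest_eq:
  assumes "D j < s" "s \<le> D (Suc j)"
  shows "latest s = t j"
proof -
  have "D i < s \<longleftrightarrow> i \<le> j" for i
  proof
    assume "D i < s"
    then show "i \<le> j" using assms(2) D_less_D_iff[of i "Suc j"] by linarith
  next
    assume "i \<le> j"
    then show "D i < s" using assms(1) D_le_D_iff[of i j] by linarith
  qed
  then have "{i. D i < s} = {..j}"
    by auto
  then have "insert 0 {t i | i. D i < s} = insert 0 (t ` {..j})"
    by auto
  also have "Sup \<dots> = t j"
    using monoD[OF mono_t] t_nonneg by (intro cSup_eq_maximum) auto
  finally show ?thesis unfolding latest_def .
qed

lemma mono_latest: "mono latest"
proof
  fix r s :: real assume "r \<le> s"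
  have "t i \<le> s" if "D i < s" for i
    using t_plus_c_le_D[of i] c_pos that by linarith
  then have "x \<le> max 0 s" if "x \<in> insert 0 {t i | i. D i < s}" for x
    using that by force
  then have "bdd_above (insert 0 {t i | i. D i < s})"
    by (rule bdd_aboveI)
  then show "latest r \<le> latest s"
    unfolding latest_def using \<open>r \<le> s\<close> by (intro cSup_subset_mono) auto
qed

lemma age_ge:
  assumes "D k \<le> s" "s \<le> D (Suc k)"
  shows "c + (s - D k) \<le> s - latest s"
proof (cases "s \<le> D 0")
  case True
  then show ?thesis
    using latest_eq_0[OF True] c_le_D[of k] by simp
next
  case False
  then obtain j where j: "D j < s" "s \<le> D (Suc j)"
    using between_deliveries[of s] by force
  then have "D j < D (Suc k)"
    using assms(2) by linarith
  then have "D j \<le> D k"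
    by simp
  then show ?thesis using latest_eq[OF j] t_plus_c_le_D[of j] by linarith
qed

lemma borel_measurable_age [measurable]: "(\<lambda>s. s - latest s) \<in> borel_measurable lborel"
  using borel_measurable_mono[OF mono_latest] by simp

lemma area_split:
  assumes "0 \<le> p" "p \<le> T"
  shows "area T = area p + (\<integral>\<^sup>+ s\<in>{p..T}. ennreal (s - latest s) \<partial>lborel)"
proof -
  have "area T = (\<integral>\<^sup>+ s. ennreal (s - latest s) * indicator {0..<p} s
                      + ennreal (s - latest s) * indicator {p..T} s \<partial>lborel)"
    unfolding area_def using assms by (intro nn_integral_cong) (auto simp: indicator_def)
  also have "\<dots> = (\<integral>\<^sup>+ s\<in>{0..<p}. ennreal (s - latest s) \<partial>lborel)
                 + (\<integral>\<^sup>+ s\<in>{p..T}. ennreal (s - latest s) \<partial>lborel)"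
    by (rule nn_integral_add) measurable
  also have "(\<integral>\<^sup>+ s\<in>{0..<p}. ennreal (s - latest s) \<partial>lborel) = area p"
    unfolding area_def
    by (intro nn_integral_cong_AE eventually_mono[OF AE_lborel_singleton[of p]])
       (auto simp: indicator_def)
  finally show ?thesis .
qed

lemma area_initial_ge:
  assumes "0 \<le> T" "T \<le> D 0"
  shows "ennreal (T^2 / 2) \<le> area T"
  using nn_integral_Icc_ge_linear[of 0 T 0 "\<lambda>s. s - latest s"] assms latest_eq_0
  unfolding area_def by simp

lemma area_ge_step:
  assumes "ennreal a \<le> area (D k)" "D k \<le> T" "T \<le> D (Suc k)"
  shows "ennreal (a + (c * (T - D k) + (T - D k)^2 / 2)) \<le> area T"
proof -
  have "ennreal (a + (c * (T - D k) + (T - D k)^2 / 2))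
      \<le> ennreal a + ennreal (c * (T - D k) + (T - D k)^2 / 2)"
    using assms(2) c_pos by (intro ennreal_plus_le) simp
  also have "\<dots> \<le> area (D k) + (\<integral>\<^sup>+ s\<in>{D k..T}. ennreal (s - latest s) \<partial>lborel)"
    using assms c_pos age_ge[of k]
    by (intro add_mono nn_integral_Icc_ge_linear) auto
  also have "\<dots> = area T"
    using assms D_nonneg by (intro area_split[symmetric]) auto
  finally show ?thesis .
qed

lemma area_ge_potential:
  fixes \<phi> :: "nat \<Rightarrow> real"
  assumes \<phi>_0: "\<phi> 0 \<le> (D 0)^2 / 2"
    and \<phi>_Suc: "\<And>k. \<phi> (Suc k) \<le> \<phi> k + (c * (D (Suc k) - D k) + (D (Suc k) - D k)^2 / 2)"
    and initial: "T \<le> D 0 \<Longrightarrow> \<psi> \<le> T^2 / 2"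
    and final: "\<And>j. D j < T \<Longrightarrow> T \<le> D (Suc j) \<Longrightarrow> \<psi> \<le> \<phi> j + (c * (T - D j) + (T - D j)^2 / 2)"
    and "0 \<le> T"
  shows "ennreal \<psi> \<le> area T"
proof -
  have area_D: "ennreal (\<phi> k) \<le> area (D k)" for k
  proof (induction k)
    case 0
    show ?case
      using \<phi>_0 area_initial_ge[OF D_nonneg order_refl] by (meson ennreal_leI order_trans)
  next
    case (Suc k)
    have "ennreal (\<phi> k + (c * (D (Suc k) - D k) + (D (Suc k) - D k)^2 / 2)) \<le> area (D (Suc k))"
      by (rule area_ge_step[OF Suc]) simp_all
    then show ?case using \<phi>_Suc[of k] by (meson ennreal_leI order_trans)
  qed
  show ?thesis
  proof (cases "T \<le> D 0")
    case True
    then show ?thesis using initial area_initial_ge \<open>0 \<le> T\<close> by (meson ennreal_leI order_trans)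
  next
    case False
    then obtain j where "D j < T" "T \<le> D (Suc j)"
      using between_deliveries[of T] by force
    then show ?thesis
      using final area_ge_step[OF area_D] by (meson ennreal_leI order_trans less_imp_le)
  qed
qed

(* Complete gaps have length x >= c, where c x + x^2/2 >= 3/2 c x; only the first and the
   last segment cost a constant. *)
lemma area_ge_linear:
  assumes "0 \<le> T"
  shows "ennreal (3/2 * c * T - 5/4 * c^2) \<le> area T"
proof (rule area_ge_potential[where \<phi> = "\<lambda>k. 3/2 * c * D k - 9/8 * c^2"])
  show "3/2 * c * D 0 - 9/8 * c^2 \<le> (D 0)^2 / 2"
    using zero_le_power2[of "D 0 - 3/2 * c"] by (simp add: power2_eq_square algebra_simps)
  show "3/2 * c * T - 5/4 * c^2 \<le> T^2 / 2"
    using add_nonneg_nonneg[OF zero_le_power2[of "T - 3/2 * c"] zero_le_power2[of "c / 2"]]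
    by (simp add: power2_eq_square algebra_simps)
next
  fix k
  have "c * (D (Suc k) - D k) \<le> (D (Suc k) - D k) * (D (Suc k) - D k)"
    using D_plus_c_le_D_Suc[of k] c_pos by (intro mult_right_mono) auto
  then show "3/2 * c * D (Suc k) - 9/8 * c^2
      \<le> 3/2 * c * D k - 9/8 * c^2 + (c * (D (Suc k) - D k) + (D (Suc k) - D k)^2 / 2)"
    by (simp add: power2_eq_square field_simps)
next
  fix j
  show "3/2 * c * T - 5/4 * c^2 \<le> 3/2 * c * D j - 9/8 * c^2 + (c * (T - D j) + (T - D j)^2 / 2)"
    using zero_le_power2[of "T - D j - c / 2"] by (simp add: power2_eq_square field_simps)
qed (rule assms)

(* The potential carries (1-e)/2 times the Cauchy-Schwarz bound D_k^2/(k+1) for the sum of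
   squared segment lengths; completing the square absorbs the linear term into c^2/(2e). *)
lemma area_ge_quadratic:
  assumes e: "0 < e" "e < 1" and "0 \<le> T" and n: "\<And>k. D k \<le> T \<Longrightarrow> k \<le> n"
  shows "ennreal (c * T - c^2 / (2 * e) + (1 - e) / 2 * (T^2 / (real n + 2))) \<le> area T"
proof (rule area_ge_potential[where \<phi> = "\<lambda>k. c * D k - c^2 / (2 * e) + (1 - e) / 2 * ((D k)^2 / (real k + 1))"])
  have completed_square: "c * y - c^2 / (2 * e) + (1 - e) / 2 * y^2 \<le> y^2 / 2" for y
  proof -
    have "y^2 / 2 - (c * y - c^2 / (2 * e) + (1 - e) / 2 * y^2) = (e * y - c)^2 / (2 * e)"
      using e by (simp add: power2_eq_square field_simps)
    moreover have "0 \<le> (e * y - c)^2 / (2 * e)"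
      using e by simp
    ultimately show ?thesis by linarith
  qed
  show "c * D 0 - c^2 / (2 * e) + (1 - e) / 2 * ((D 0)^2 / (real 0 + 1)) \<le> (D 0)^2 / 2"
    using completed_square by simp
  have "T^2 / (real n + 2) \<le> T^2 / 1"
    by (intro divide_left_mono) auto
  then have "(1 - e) / 2 * (T^2 / (real n + 2)) \<le> (1 - e) / 2 * T^2"
    using e by (intro mult_left_mono) auto
  then show "c * T - c^2 / (2 * e) + (1 - e) / 2 * (T^2 / (real n + 2)) \<le> T^2 / 2"
    using completed_square[of T] by linarith
next
  fix k
  show "c * D (Suc k) - c^2 / (2 * e) + (1 - e) / 2 * ((D (Suc k))^2 / (real (Suc k) + 1))
      \<le> c * D k - c^2 / (2 * e) + (1 - e) / 2 * ((D k)^2 / (real k + 1))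
         + (c * (D (Suc k) - D k) + (D (Suc k) - D k)^2 / 2)"
    using weighted_power2_add_divide_le[of "real k + 1" e "D k" "D (Suc k) - D k"] e
    by (simp add: algebra_simps)
next
  fix j assume "D j < T"
  then have "real j + 2 \<le> real n + 2"
    using n[of j] by simp
  then have "(1 - e) / 2 * (T^2 / (real n + 2)) \<le> (1 - e) / 2 * (T^2 / (real j + 2))"
    using e by (intro mult_left_mono divide_left_mono) auto
  also have "\<dots> \<le> (1 - e) / 2 * ((D j)^2 / (real j + 1)) + (T - D j)^2 / 2"
    using weighted_power2_add_divide_le[of "real j + 1" e "D j" "T - D j"] e
    by (simp add: algebra_simps)
  finally show "c * T - c^2 / (2 * e) + (1 - e) / 2 * (T^2 / (real n + 2))
      \<le> c * D j - c^2 / (2 * e) + (1 - e) / 2 * ((D j)^2 / (real j + 1))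
         + (c * (T - D j) + (T - D j)^2 / 2)"
    by (simp add: algebra_simps)
qed (rule assms)

end

locale causal_update_schedule = update_schedule +
  fixes x :: "nat \<Rightarrow> real"
  assumes energy_causal: "\<And>i. i \<le> arrivals_before x (t i)"
begin

lemma finite_arrivals: "finite {k. 1 \<le> k \<and> arrival x k < T}"
proof -
  obtain n where "T \<le> D n"
    using exists_D_ge by blast
  then have T_le: "T \<le> t (Suc n)"
    using D_le_t_Suc[of n] by linarith
  have "0 < arrivals_before x (t (Suc n))"
    using energy_causal[of "Suc n"] by linarith
  then have "finite {k. 1 \<le> k \<and> arrival x k < t (Suc n)}"
    unfolding arrivals_before_def by (rule card_ge_0_finite)
  then show ?thesis
    by (rule finite_subset[rotated]) (use T_le in auto)
qed

lemma le_arrivals_before_if_D_le: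
  assumes "D k \<le> T"
  shows "k \<le> arrivals_before x T"
proof -
  have "t k < T"
    using assms t_plus_c_le_D[of k] c_pos by linarith
  then have "arrivals_before x (t k) \<le> arrivals_before x T"
    unfolding arrivals_before_def using finite_arrivals by (intro card_mono) auto
  then show ?thesis
    using energy_causal[of k] by linarith
qed

end

section \<open>Energy arrivals at the source\<close>

lemma prob_space_Exp1: "prob_space Exp1"
  unfolding Exp1_def by (rule prob_space_exponential_density) simp

lemma sets_Exp1 [simp, measurable_cong]: "sets Exp1 = sets borel"
  unfolding Exp1_def by simp

lemma space_Exp1 [simp]: "space Exp1 = UNIV"
  unfolding Exp1_def by simp

abbreviation Exp1_iid :: "(nat \<Rightarrow> real) measure" where
  "Exp1_iid \<equiv> \<Pi>\<^sub>M i\<in>UNIV. Exp1"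

interpretation Exp1_iid: product_prob_space "\<lambda>_::nat. Exp1" UNIV
  by (simp add: product_prob_space_def product_sigma_finite_def prob_space_Exp1
      prob_space_imp_sigma_finite product_prob_space_axioms_def)

lemma prob_space_Exp1_iid: "prob_space Exp1_iid"
  by (intro prob_space_PiM prob_space_Exp1)

lemma prob_space_EH_space: "prob_space EH_space"
  unfolding EH_space_def by (intro prob_space_pair prob_space_PiM prob_space_Exp1)

lemma nn_integral_EH_space_fst:
  assumes [measurable]: "g \<in> borel_measurable Exp1_iid"
  shows "(\<integral>\<^sup>+ \<omega>. g (fst \<omega>) \<partial>EH_space) = (\<integral>\<^sup>+ x. g x \<partial>Exp1_iid)"
proof -
  have "distr EH_space Exp1_iid fst = Exp1_iid"
    unfolding EH_space_def by (intro prob_space.distr_pair_fst prob_space_PiM prob_space_Exp1)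
  then show ?thesis
    using nn_integral_distr[of fst EH_space Exp1_iid g] by (simp add: EH_space_def)
qed

lemma nn_integral_Exp1_exp:
  assumes "0 < \<delta>"
  shows "(\<integral>\<^sup>+ y. ennreal (exp (- \<delta> * y)) \<partial>Exp1) = ennreal (1 / (1 + \<delta>))"
proof -
  define l where "l = 1 + \<delta>"
  have l: "0 < l" using assms unfolding l_def by simp
  have "(\<integral>\<^sup>+ y. ennreal (exp (- \<delta> * y)) \<partial>Exp1)
      = (\<integral>\<^sup>+ y. ennreal (exponential_density 1 y) * ennreal (exp (- \<delta> * y)) \<partial>lborel)"
    unfolding Exp1_def by (rule nn_integral_density) measurable
  also have "\<dots> = (\<integral>\<^sup>+ y. ennreal (exp (- l * y)) * indicator {0..} y \<partial>lborel)"
    by (intro nn_integral_cong)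
       (auto simp: l_def exponential_density_def indicator_def ennreal_mult'[symmetric]
         exp_add[symmetric] algebra_simps)
  also have "\<dots> = ennreal (0 - (- exp (- l * 0) / l))"
  proof (rule nn_integral_FTC_atLeast)
    fix y :: real
    show "((\<lambda>y. - exp (- l * y) / l) has_real_derivative exp (- l * y)) (at y)"
      using l by (auto intro!: derivative_eq_intros simp: field_simps)
    show "((\<lambda>y. - exp (- l * y) / l) \<longlongrightarrow> 0) at_top"
      using l by real_asymp
  qed auto
  finally show ?thesis by (simp add: l_def)
qed

lemma nn_integral_Exp1_iid_prod:
  assumes [measurable]: "\<And>j. f j \<in> borel_measurable borel"
  shows "(\<integral>\<^sup>+ x. (\<Prod>j<m. f j (x j)) \<partial>Exp1_iid) = (\<Prod>j<m. \<integral>\<^sup>+ y. f j y \<partial>Exp1)"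
proof -
  have "(\<integral>\<^sup>+ x. (\<Prod>j<m. f j (x j)) \<partial>Exp1_iid)
      = (\<integral>\<^sup>+ x. (\<Prod>j<m. f j (restrict x {..<m} j)) \<partial>Exp1_iid)"
    by (intro nn_integral_cong prod.cong) auto
  also have "\<dots> = (\<integral>\<^sup>+ y. (\<Prod>j<m. f j (y j)) \<partial>distr Exp1_iid (\<Pi>\<^sub>M i\<in>{..<m}. Exp1) (\<lambda>x. restrict x {..<m}))"
    by (rule nn_integral_distr[symmetric], rule measurable_restrict_subset) auto
  also have "\<dots> = (\<integral>\<^sup>+ y. (\<Prod>j<m. f j (y j)) \<partial>(\<Pi>\<^sub>M i\<in>{..<m}. Exp1))"
    by (subst Exp1_iid.distr_PiM_restrict_finite) auto
  also have "\<dots> = (\<Prod>j<m. \<integral>\<^sup>+ y. f j y \<partial>Exp1)"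
    by (rule Exp1_iid.product_nn_integral_prod) auto
  finally show ?thesis .
qed

lemma borel_measurable_arrival [measurable]: "(\<lambda>x. arrival x k) \<in> borel_measurable Exp1_iid"
  unfolding arrival_def by measurable

lemma arrival_chernoff:
  assumes "0 < \<delta>"
  shows "(\<integral>\<^sup>+ x. of_bool (arrival x k < T) \<partial>Exp1_iid) \<le> ennreal (exp (\<delta> * T) * (1 / (1 + \<delta>)) ^ k)"
proof -
  have "(\<integral>\<^sup>+ x. of_bool (arrival x k < T) \<partial>Exp1_iid)
      \<le> (\<integral>\<^sup>+ x. ennreal (exp (\<delta> * T)) * (\<Prod>j<k. ennreal (exp (- \<delta> * x j))) \<partial>Exp1_iid)"
  proof (rule nn_integral_mono)
    fix x :: "nat \<Rightarrow> real"
    have "ennreal (exp (\<delta> * T)) * (\<Prod>j<k. ennreal (exp (- \<delta> * x j)))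
        = ennreal (exp (\<delta> * (T - arrival x k)))"
      by (simp add: prod_ennreal ennreal_mult'[symmetric] arrival_def exp_sum[symmetric]
          exp_add[symmetric] sum_distrib_left algebra_simps sum_negf)
    then show "of_bool (arrival x k < T)
        \<le> ennreal (exp (\<delta> * T)) * (\<Prod>j<k. ennreal (exp (- \<delta> * x j)))"
      using assms by (auto intro!: ennreal_leI)
  qed
  also have "\<dots> = ennreal (exp (\<delta> * T)) * (\<integral>\<^sup>+ x. (\<Prod>j<k. ennreal (exp (- \<delta> * x j))) \<partial>Exp1_iid)"
    by (rule nn_integral_cmult) measurable
  also have "(\<integral>\<^sup>+ x. (\<Prod>j<k. ennreal (exp (- \<delta> * x j))) \<partial>Exp1_iid)
      = (\<Prod>j<k. \<integral>\<^sup>+ y. ennreal (exp (- \<delta> * y)) \<partial>Exp1)"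
    by (rule nn_integral_Exp1_iid_prod) measurable
  also have "ennreal (exp (\<delta> * T)) * (\<Prod>j<k. \<integral>\<^sup>+ y. ennreal (exp (- \<delta> * y)) \<partial>Exp1)
      = ennreal (exp (\<delta> * T) * (1 / (1 + \<delta>)) ^ k)"
    using assms by (simp only: nn_integral_Exp1_exp) (simp add: ennreal_power ennreal_mult')
  finally show ?thesis .
qed

(* Unlike arrivals_before, a cardinality that is 0 for infinite sets, this count needs no
   finiteness assumption and is measurable. *)
definition arrival_count :: "(nat \<Rightarrow> real) \<Rightarrow> real \<Rightarrow> ennreal" where
  "arrival_count x T = (\<Sum>k. of_bool (arrival x (Suc k) < T))"

lemma borel_measurable_arrival_count [measurable]:
  "(\<lambda>x. arrival_count x T) \<in> borel_measurable Exp1_iid"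
  unfolding arrival_count_def by measurable

lemma arrival_count_eq_arrivals_before:
  assumes "finite {k. 1 \<le> k \<and> arrival x k < T}"
  shows "arrival_count x T = of_nat (arrivals_before x T)"
proof -
  define S where "S = {k. arrival x (Suc k) < T}"
  have eq: "{k. 1 \<le> k \<and> arrival x k < T} = Suc ` S"
    unfolding S_def by (auto simp: image_iff Suc_le_eq gr0_conv_Suc)
  then have "finite S"
    using assms finite_imageD[of Suc S] by simp
  then have "(\<lambda>k. if k \<in> S then 1 else 0 :: ennreal) sums of_nat (card S)"
    using sums_If_finite_set[of S "\<lambda>_. 1 :: ennreal"] by simp
  then have "arrival_count x T = of_nat (card S)"
    unfolding arrival_count_def S_def by (simp add: sums_iff of_bool_def)
  then show ?thesis
    unfolding arrivals_before_def eq by (simp add: card_image)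
qed

lemma exp_le_power:
  assumes "0 < \<delta>" "(1 + \<delta>) * T \<le> real m"
  shows "exp (\<delta> * T) \<le> (1 + \<delta>) ^ m"
proof -
  have "\<delta> * T = \<delta> / (1 + \<delta>) * ((1 + \<delta>) * T)"
    using assms(1) by (simp add: field_simps)
  also have "\<dots> \<le> \<delta> / (1 + \<delta>) * real m"
    using assms by (intro mult_left_mono) auto
  also have "\<dots> \<le> ln (1 + \<delta>) * real m"
    using ln_add1_ge[of \<delta>] assms(1) by (intro mult_right_mono) (auto simp: add.commute)
  finally have "exp (\<delta> * T) \<le> exp (real m * ln (1 + \<delta>))"
    by (simp add: mult.commute)
  also have "\<dots> = (1 + \<delta>) ^ m"
    using assms(1) by (simp add: exp_of_nat_mult mult.commute)
  finally show ?thesis .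
qed

lemma nn_integral_arrival_count_le:
  assumes "0 < \<delta>" "0 \<le> T"
  shows "(\<integral>\<^sup>+ x. arrival_count x T \<partial>Exp1_iid) \<le> ennreal ((1 + \<delta>) * T + 1 + 1 / \<delta>)"
proof -
  define m where "m = nat \<lceil>(1 + \<delta>) * T\<rceil>"
  have "real m = of_int \<lceil>(1 + \<delta>) * T\<rceil>"
    unfolding m_def using assms by simp
  then have m: "(1 + \<delta>) * T \<le> real m" "real m \<le> (1 + \<delta>) * T + 1"
    by linarith+
  define q where "q = 1 / (1 + \<delta>)"
  have q: "0 < q" "q < 1"
    using assms unfolding q_def by auto
  define b where "b k = (if k < m then 1 else exp (\<delta> * T) * q ^ Suc k)" for k
  have "(\<lambda>k. b (k + m)) sums (exp (\<delta> * T) * q ^ Suc m * (1 / (1 - q)))"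
    unfolding b_def using sums_mult[OF geometric_sums, of q "exp (\<delta> * T) * q ^ Suc m"] q
    by (simp add: power_add mult_ac)
  moreover have "(\<Sum>k<m. b k) = real m"
    by (simp add: b_def)
  ultimately have b_sums: "b sums (exp (\<delta> * T) * q ^ Suc m * (1 / (1 - q)) + real m)"
    using sums_iff_shift[of b m] by simp
  have "exp (\<delta> * T) * q ^ Suc m * (1 / (1 - q)) = exp (\<delta> * T) * q ^ m * (q / (1 - q))"
    by simp
  also have "q / (1 - q) = 1 / \<delta>"
    using assms unfolding q_def by (simp add: field_simps)
  finally have "exp (\<delta> * T) * q ^ Suc m * (1 / (1 - q)) = exp (\<delta> * T) * q ^ m * (1 / \<delta>)" .
  with b_sums have b: "b sums (exp (\<delta> * T) * q ^ m * (1 / \<delta>) + real m)"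
    by simp
  have "exp (\<delta> * T) * q ^ m \<le> 1"
    using exp_le_power[OF assms(1) m(1)] assms unfolding q_def by (simp add: field_simps)
  then have "exp (\<delta> * T) * q ^ m * (1 / \<delta>) \<le> 1 / \<delta>"
    using assms q by (intro mult_left_le_one_le) auto
  then have s: "exp (\<delta> * T) * q ^ m * (1 / \<delta>) + real m \<le> (1 + \<delta>) * T + 1 + 1 / \<delta>"
    using m(2) by linarith
  have "(\<integral>\<^sup>+ x. arrival_count x T \<partial>Exp1_iid) = (\<Sum>k. \<integral>\<^sup>+ x. of_bool (arrival x (Suc k) < T) \<partial>Exp1_iid)"
    unfolding arrival_count_def by (rule nn_integral_suminf) measurable
  also have "\<dots> \<le> (\<Sum>k. ennreal (b k))"
  proof (intro suminf_le allI)
    fix k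
    have "(\<integral>\<^sup>+ x. of_bool (arrival x (Suc k) < T) \<partial>Exp1_iid) \<le> (\<integral>\<^sup>+ x. 1 \<partial>Exp1_iid)"
      by (intro nn_integral_mono) simp
    also have "\<dots> = 1"
      by (simp add: prob_space.emeasure_space_1[OF prob_space_Exp1_iid])
    finally show "(\<integral>\<^sup>+ x. of_bool (arrival x (Suc k) < T) \<partial>Exp1_iid) \<le> ennreal (b k)"
      using arrival_chernoff[OF assms(1), of "Suc k" T] unfolding b_def q_def by simp
  qed simp_all
  also have "\<dots> = ennreal (exp (\<delta> * T) * q ^ m * (1 / \<delta>) + real m)"
    using q by (intro suminf_ennreal_eq[OF _ b]) (simp add: b_def)
  finally show ?thesis
    using s by (meson ennreal_leI order_trans)
qed

section \<open>Averaging over the energy arrivals\<close>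

(* Jensen's inequality for 1/x, via the tangent of 1/m at m = B. *)
lemma nn_integral_inverse_ge:
  fixes N :: "'a \<Rightarrow> ennreal"
  assumes "prob_space M" and [measurable]: "N \<in> borel_measurable M"
    and mean: "(\<integral>\<^sup>+ x. N x \<partial>M) + 2 \<le> ennreal B"
  shows "ennreal (1 / B) \<le> (\<integral>\<^sup>+ x. inverse (N x + 2) \<partial>M)"
proof -
  interpret prob_space M by fact
  have "(2 :: ennreal) \<le> (\<integral>\<^sup>+ x. N x \<partial>M) + 2"
    by (rule add_increasing) simp_all
  from order_trans[OF this mean] have B: "2 \<le> B"
    by simp
  have tangent: "ennreal (2 / B) \<le> inverse (N x + 2) + ennreal (1 / B^2) * (N x + 2)" for x
  proof (cases "N x")
    case (real n)
    have "2 / B \<le> 1 / m + m / B^2" if "0 < m" for m :: real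
    proof -
      have "1 / m + m / B^2 - 2 / B = (m - B)^2 / (m * B^2)"
        using that B by (simp add: field_simps power2_eq_square)
      also have "\<dots> \<ge> 0"
        using that by simp
      finally show ?thesis by simp
    qed
    then have "ennreal (2 / B) \<le> ennreal (1 / (n + 2) + (n + 2) / B^2)"
      using real by (intro ennreal_leI) simp
    also have "\<dots> = ennreal (1 / (n + 2)) + ennreal ((n + 2) / B^2)"
      using real by (intro ennreal_plus) auto
    also have "ennreal (1 / (n + 2)) = inverse (ennreal (n + 2))"
      using real by (subst inverse_ennreal) (auto simp: inverse_eq_divide)
    also have "ennreal ((n + 2) / B^2) = ennreal (1 / B^2) * ennreal (n + 2)"
      by (subst ennreal_mult'[symmetric]) simp_all
    also have "ennreal (n + 2) = N x + 2"
      using real by simp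
    finally show ?thesis .
  qed (use B in simp)
  have "ennreal (1 / B) + ennreal (1 / B) = (\<integral>\<^sup>+ x. ennreal (2 / B) \<partial>M)"
    using B by (subst ennreal_plus[symmetric]) (simp_all add: emeasure_space_1)
  also have "\<dots> \<le> (\<integral>\<^sup>+ x. inverse (N x + 2) + ennreal (1 / B^2) * (N x + 2) \<partial>M)"
    by (intro nn_integral_mono tangent)
  also have "\<dots> = (\<integral>\<^sup>+ x. inverse (N x + 2) \<partial>M) + ennreal (1 / B^2) * ((\<integral>\<^sup>+ x. N x \<partial>M) + 2)"
    by (simp add: nn_integral_add nn_integral_cmult emeasure_space_1)
  also have "\<dots> \<le> (\<integral>\<^sup>+ x. inverse (N x + 2) \<partial>M) + ennreal (1 / B^2) * ennreal B"
    by (intro add_left_mono mult_left_mono mean) simp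
  also have "ennreal (1 / B^2) * ennreal B = ennreal (1 / B)"
    using B by (subst ennreal_mult'[symmetric]) (simp_all add: power2_eq_square)
  finally show ?thesis
    using ennreal_add_left_cancel_le[of "ennreal (1 / B)"] by (simp add: add_ac)
qed

lemma Limsup_at_top_ge_limit:
  fixes f :: "real \<Rightarrow> ennreal" and g :: "real \<Rightarrow> real"
  assumes "(g \<longlongrightarrow> a) at_top" and "\<forall>\<^sub>F T in at_top. ennreal (g T) \<le> f T"
  shows "ennreal a \<le> Limsup at_top f"
proof -
  have "Limsup at_top (\<lambda>T. ennreal (g T)) = ennreal a"
    using tendsto_ennrealI[OF assms(1)] by (intro lim_imp_Limsup) simp_all
  then show ?thesis
    using Limsup_mono[OF assms(2)] by simp
qed

lemma borel_measurable_arrival_count_fst [measurable]: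
  "(\<lambda>\<omega>. arrival_count (fst \<omega>) T) \<in> borel_measurable EH_space"
  unfolding EH_space_def by measurable

lemma age_integral_eq_area:
  assumes "update_schedule t (\<lambda>i. tb i + db) c"
  shows "(\<integral>\<^sup>+ s\<in>{0..T}. ennreal (age db t tb s) \<partial>lborel) = update_schedule.area t (\<lambda>i. tb i + db) T"
  by (simp add: update_schedule.area_def[OF assms] update_schedule.latest_def[OF assms]
      age_def latest_gen_def)

lemma feasible_policy_AE_causal_update_schedule:
  assumes "feasible_policy d db t tb" "0 < d" "0 < db"
  shows "AE \<omega> in EH_space.
    causal_update_schedule (\<lambda>i. t i \<omega>) (\<lambda>i. tb i \<omega> + db) (d + db) (fst \<omega>)"
proof -
  have "AE \<omega> in EH_space. 0 \<le> t 0 \<omega> \<and> (\<forall>i. t i \<omega> + d \<le> tb i \<omega>) \<and> (\<forall>i. tb i \<omega> + db \<le> t (Suc i) \<omega>) \<and>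
    (\<forall>i. i \<le> arrivals_before (fst \<omega>) (t i \<omega>)) \<and> (\<forall>i. i \<le> arrivals_before (snd \<omega>) (tb i \<omega>))"
    using assms(1) unfolding feasible_policy_def by blast
  then show ?thesis
  proof (rule eventually_mono)
  fix \<omega> assume "0 \<le> t 0 \<omega> \<and> (\<forall>i. t i \<omega> + d \<le> tb i \<omega>) \<and> (\<forall>i. tb i \<omega> + db \<le> t (Suc i) \<omega>) \<and>
    (\<forall>i. i \<le> arrivals_before (fst \<omega>) (t i \<omega>)) \<and> (\<forall>i. i \<le> arrivals_before (snd \<omega>) (tb i \<omega>))"
  then show "causal_update_schedule (\<lambda>i. t i \<omega>) (\<lambda>i. tb i \<omega> + db) (d + db) (fst \<omega>)"
    using assms(2,3)
    by (intro causal_update_schedule.intro update_schedule.intro causal_update_schedule_axioms.intro)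
       (auto simp: add.assoc[symmetric])
  qed
qed

lemma expected_area_ge_linear:
  assumes "feasible_policy d db t tb" "0 < d" "0 < db" "0 \<le> T"
  shows "ennreal (3/2 * (d + db) * T - 5/4 * (d + db)^2) \<le> expected_area db t tb T"
proof -
  have "AE \<omega> in EH_space. ennreal (3/2 * (d + db) * T - 5/4 * (d + db)^2)
      \<le> (\<integral>\<^sup>+ s\<in>{0..T}. ennreal (age db (\<lambda>i. t i \<omega>) (\<lambda>i. tb i \<omega>) s) \<partial>lborel)"
    using feasible_policy_AE_causal_update_schedule[OF assms(1-3)]
  proof (rule eventually_mono)
    fix \<omega> assume "causal_update_schedule (\<lambda>i. t i \<omega>) (\<lambda>i. tb i \<omega> + db) (d + db) (fst \<omega>)"
    then interpret causal_update_schedule "\<lambda>i. t i \<omega>" "\<lambda>i. tb i \<omega> + db" "d + db" "fst \<omega>" .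
    show "ennreal (3/2 * (d + db) * T - 5/4 * (d + db)^2)
        \<le> (\<integral>\<^sup>+ s\<in>{0..T}. ennreal (age db (\<lambda>i. t i \<omega>) (\<lambda>i. tb i \<omega>) s) \<partial>lborel)"
      unfolding age_integral_eq_area[OF update_schedule_axioms] using area_ge_linear[OF assms(4)] .
  qed
  then have "(\<integral>\<^sup>+ \<omega>. ennreal (3/2 * (d + db) * T - 5/4 * (d + db)^2) \<partial>EH_space) \<le> expected_area db t tb T"
    unfolding expected_area_def by (rule nn_integral_mono_AE)
  then show ?thesis
    by (simp add: prob_space.emeasure_space_1[OF prob_space_EH_space])
qed

(* The assumption on T makes the constant term of the sample-path bound nonnegative, so that
   the bound is additive in ennreal and can be integrated termwise. *)
lemma expected_area_ge_quadratic:
  assumes "feasible_policy d db t tb" "0 < d" "0 < db" and e: "0 < e" "e < 1"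
    and T: "(d + db)^2 / (2 * e) \<le> (d + db) * T"
  shows "ennreal ((d + db) * T - (d + db)^2 / (2 * e) + (1 - e) / 2 * T^2 / ((1 + e) * T + 3 + 1 / e))
    \<le> expected_area db t tb T"
proof -
  define c where "c = d + db"
  define \<alpha> where "\<alpha> = c * T - c^2 / (2 * e)"
  define \<beta> where "\<beta> = (1 - e) / 2 * T^2"
  define B where "B = (1 + e) * T + 3 + 1 / e"
  have c: "0 < c" and \<alpha>: "0 \<le> \<alpha>" and \<beta>: "0 \<le> \<beta>"
    using assms unfolding c_def \<alpha>_def \<beta>_def by auto
  have "0 < c^2 / (2 * e)"
    using c e by simp
  then have "0 < c * T"
    using T unfolding c_def by linarith
  then have "0 \<le> T"
    using c by (simp add: zero_less_mult_iff)
  let ?N = "\<lambda>\<omega>. arrival_count (fst \<omega>) T"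
  have "(\<integral>\<^sup>+ \<omega>. ?N \<omega> \<partial>EH_space) + 2 \<le> ennreal ((1 + e) * T + 1 + 1 / e) + ennreal 2"
    using nn_integral_arrival_count_le[OF e(1) \<open>0 \<le> T\<close>]
    by (simp add: nn_integral_EH_space_fst[of "\<lambda>x. arrival_count x T"] add_right_mono)
  also have "\<dots> = ennreal B"
    unfolding B_def using e \<open>0 \<le> T\<close> by (subst ennreal_plus[symmetric]) (simp_all add: add_ac)
  finally have mean: "(\<integral>\<^sup>+ \<omega>. ?N \<omega> \<partial>EH_space) + 2 \<le> ennreal B" .
  have AE: "AE \<omega> in EH_space. ennreal \<alpha> + ennreal \<beta> * inverse (?N \<omega> + 2)
      \<le> (\<integral>\<^sup>+ s\<in>{0..T}. ennreal (age db (\<lambda>i. t i \<omega>) (\<lambda>i. tb i \<omega>) s) \<partial>lborel)"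
    using feasible_policy_AE_causal_update_schedule[OF assms(1-3)]
  proof (rule eventually_mono)
    fix \<omega> assume "causal_update_schedule (\<lambda>i. t i \<omega>) (\<lambda>i. tb i \<omega> + db) (d + db) (fst \<omega>)"
    then interpret causal_update_schedule "\<lambda>i. t i \<omega>" "\<lambda>i. tb i \<omega> + db" "d + db" "fst \<omega>" .
    define n where "n = arrivals_before (fst \<omega>) T"
    have "?N \<omega> + 2 = ennreal (real n + 2)"
      using arrival_count_eq_arrivals_before[OF finite_arrivals]
      by (simp add: n_def ennreal_of_nat_eq_real_of_nat)
    then have "inverse (?N \<omega> + 2) = ennreal (1 / (real n + 2))"
      by (simp only:) (subst inverse_ennreal; simp add: inverse_eq_divide)
    then have "ennreal \<alpha> + ennreal \<beta> * inverse (?N \<omega> + 2) = ennreal (\<alpha> + \<beta> * (1 / (real n + 2)))"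
      using \<alpha> \<beta> by (simp add: ennreal_plus[symmetric] ennreal_mult[symmetric] del: ennreal_plus)
    also have "\<dots> \<le> area T"
      using area_ge_quadratic[OF e \<open>0 \<le> T\<close> le_arrivals_before_if_D_le]
      unfolding \<alpha>_def \<beta>_def c_def n_def by simp
    finally show "ennreal \<alpha> + ennreal \<beta> * inverse (?N \<omega> + 2)
        \<le> (\<integral>\<^sup>+ s\<in>{0..T}. ennreal (age db (\<lambda>i. t i \<omega>) (\<lambda>i. tb i \<omega>) s) \<partial>lborel)"
      unfolding age_integral_eq_area[OF update_schedule_axioms] .
  qed
  have "0 < B"
    using e \<open>0 \<le> T\<close> unfolding B_def by (simp add: add_nonneg_pos)
  then have "ennreal (\<alpha> + \<beta> / B) = ennreal \<alpha> + ennreal (\<beta> * (1 / B))"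
    using \<alpha> \<beta> by simp
  also have "ennreal (\<beta> * (1 / B)) = ennreal \<beta> * ennreal (1 / B)"
    using \<beta> by (rule ennreal_mult')
  also have "ennreal \<alpha> + ennreal \<beta> * ennreal (1 / B)
      \<le> ennreal \<alpha> + ennreal \<beta> * (\<integral>\<^sup>+ \<omega>. inverse (?N \<omega> + 2) \<partial>EH_space)"
    using nn_integral_inverse_ge[OF prob_space_EH_space _ mean]
    by (intro add_left_mono mult_left_mono) simp_all
  also have "\<dots> = (\<integral>\<^sup>+ \<omega>. ennreal \<alpha> + ennreal \<beta> * inverse (?N \<omega> + 2) \<partial>EH_space)"
    by (simp add: nn_integral_add nn_integral_cmult prob_space.emeasure_space_1[OF prob_space_EH_space])
  also have "\<dots> \<le> expected_area db t tb T"
    unfolding expected_area_def using AE by (rule nn_integral_mono_AE)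
  finally show ?thesis
    unfolding \<alpha>_def \<beta>_def B_def c_def by simp
qed

lemma avg_age_ge_linear:
  assumes "feasible_policy d db t tb" "0 < d" "0 < db"
  shows "ennreal (3/2 * (d + db)) \<le> avg_age db t tb"
  unfolding avg_age_def
proof (rule Limsup_at_top_ge_limit)
  show "((\<lambda>T. 1 / T * (3/2 * (d + db) * T - 5/4 * (d + db)^2)) \<longlongrightarrow> 3/2 * (d + db)) at_top"
    by real_asymp
  show "\<forall>\<^sub>F T in at_top. ennreal (1 / T * (3/2 * (d + db) * T - 5/4 * (d + db)^2))
      \<le> ennreal (1 / T) * expected_area db t tb T"
    using eventually_gt_at_top[of 0]
  proof (rule eventually_mono)
    fix T :: real assume "0 < T"
    then have "ennreal (1 / T * (3/2 * (d + db) * T - 5/4 * (d + db)^2))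
        = ennreal (1 / T) * ennreal (3/2 * (d + db) * T - 5/4 * (d + db)^2)"
      by (intro ennreal_mult') simp
    then show "ennreal (1 / T * (3/2 * (d + db) * T - 5/4 * (d + db)^2))
        \<le> ennreal (1 / T) * expected_area db t tb T"
      using expected_area_ge_linear[OF assms, of T] \<open>0 < T\<close> by (simp add: mult_left_mono)
  qed
qed

lemma avg_age_ge_half:
  assumes "feasible_policy d db t tb" "0 < d" "0 < db"
  shows "ennreal (1/2 + d + db) \<le> avg_age db t tb"
proof -
  define c where "c = d + db"
  have c: "0 < c"
    using assms unfolding c_def by simp
  have "ennreal (c + (1 - e) / (2 * (1 + e))) \<le> avg_age db t tb" if e: "0 < e" "e < 1" for e
    unfolding avg_age_def
  proof (rule Limsup_at_top_ge_limit)
    show "((\<lambda>T. 1 / T * (c * T - c^2 / (2 * e) + (1 - e) / 2 * T^2 / ((1 + e) * T + 3 + 1 / e)))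
        \<longlongrightarrow> c + (1 - e) / (2 * (1 + e))) at_top"
      using e by (real_asymp simp: field_simps)
    show "\<forall>\<^sub>F T in at_top.
        ennreal (1 / T * (c * T - c^2 / (2 * e) + (1 - e) / 2 * T^2 / ((1 + e) * T + 3 + 1 / e)))
      \<le> ennreal (1 / T) * expected_area db t tb T"
      using eventually_ge_at_top[of "c / (2 * e)"] eventually_gt_at_top[of 0]
    proof eventually_elim
      case (elim T)
      then have "c^2 / (2 * e) \<le> c * T"
        using c e by (simp add: field_simps power2_eq_square)
      moreover have "ennreal (1 / T * (c * T - c^2 / (2 * e) + (1 - e) / 2 * T^2 / ((1 + e) * T + 3 + 1 / e)))
        = ennreal (1 / T) * ennreal (c * T - c^2 / (2 * e) + (1 - e) / 2 * T^2 / ((1 + e) * T + 3 + 1 / e))"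
        using elim by (intro ennreal_mult') simp
      ultimately show ?case
        using expected_area_ge_quadratic[OF assms e, of T] unfolding c_def
        by (simp add: mult_left_mono)
    qed
  qed
  moreover have "((\<lambda>e. ennreal (c + (1 - e) / (2 * (1 + e)))) \<longlongrightarrow> ennreal (c + 1/2)) (at_right 0)"
    by (intro tendsto_ennrealI) real_asymp
  moreover have "\<forall>\<^sub>F e in at_right 0. 0 < e \<and> e < (1 :: real)"
    using eventually_at_right_real[of 0 1] by simp
  ultimately have "ennreal (c + 1/2) \<le> avg_age db t tb"
    by (intro tendsto_upperbound[where F = "at_right 0"]) (auto elim: eventually_mono)
  then show ?thesis
    unfolding c_def by (simp add: add_ac)
qed

theorem lemma7:
  fixes d db :: real
  assumes "0 < d" and "0 < db"
  shows "ennreal (max (1/2 + d + db) (3/2 * (d + db))) \<le> opt_age d db"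
  unfolding opt_age_def
proof (rule INF_greatest, clarify)
  fix t tb assume "feasible_policy d db t tb"
  then show "ennreal (max (1/2 + d + db) (3/2 * (d + db))) \<le> avg_age db t tb"
    using avg_age_ge_half avg_age_ge_linear assms by (simp add: max_def)
qed

end
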